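(* In the setting of the (tweaked) $s$-wide replacement product described in the context, let $z\in\mathbb F_2^{[n]}$ with $\mathrm{bias}(z)\le\eta_0$ and let $P_z$ be the diagonal matrix indexed by $[n]\times[d_1]^s$ with $(P_z)_{(v,h),(v,h)}=(-1)^{z_v}$. Suppose $\gamma\ge0$ is such that $\sigma_2(M_i)\le\gamma$ for all $0\le i\le s-2$. Then $$\Big\|\,M_{s-2}P_z\,M_{s-3}P_z\cdots M_1P_z\,M_0P_z\Big\|_{\mathrm{op}}\le(\eta_0+2\gamma)^{\lfloor (s-1)/2\rfloor}.$$
   Context: Let $G$ be a $d_1$-regular undirected graph on $[n]$ whose neighbours of each vertex $v$ are labeled $v_G[1],\dots,v_G[d_1]$, with rotation map $\mathrm{rot}_G:[n]\times[d_1]\to[n]\times[d_1]$, $\mathrm{rot}_G(v,j)=(v',j')$ iff $v_G[j]=v'$ and $v'_G[j']=v$; assume it is locally invertible, i.e. there is a bijection $\varphi:[d_1]\to[d_1]$ with $\mathrm{rot}_G(v,j)=(v_G[j],\varphi(j))$. Let $A_G$ be the normalized adjacency matrix of $G$. Let $H$ be a $d_2$-regular undirected graph on vertex set $[d_1]^s$ with normalized adjacency matrix $A_H$. For $i\in\{0,\dots,s-1\}$ let $\mathrm{Rot}_i:[n]\times[d_1]^s\to[n]\times[d_1]^s$ send $(v,(a_0,\dots,a_{s-1}))$ to $(v',(a_0,\dots,a_{i-1},a_i',a_{i+1},\dots,a_{s-1}))$ where $(v',a_i')=\mathrm{rot}_G(v,a_i)$, and let $G_i$ be the permutation matrix realizing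 $\mathrm{Rot}_i$ on $\mathbb R^{[n]\times[d_1]^s}=\mathbb R^{V(G)}\otimes\mathbb R^{V(H)}$. For every integer $i$ set $M_i=(I\otimes A_H)\,G_{i\bmod s}\,(I\otimes A_H)$. $\sigma_2(X)$ denotes the second largest singular value of $X$; norms and singular values are with respect to the inner product given by the uniform probability measure on coordinates (equivalently the standard ones, the space being fixed). $\mathrm{bias}(z)=|\mathbb E_{v\in[n]}(-1)^{z_v}|$. *)

theory Defs
  imports Complex_Main
begin

text \<open>Vectors are functions 'i => real, matrices are functions 'i => 'i => real; only the
  values on the finite index set V matter.  Norms are the standard Euclidean ones on R^V
  (operator norms and singular values coincide with those for the uniform probability measure).\<close>

definition mat_mul :: "'i set \<Rightarrow> ('i \<Rightarrow> 'i \<Rightarrow> real) \<Rightarrow> ('i \<Rightarrow> 'i \<Rightarrow> real) \<Rightarrow> ('i \<Rightarrow> 'i \<Rightarrow> real)" where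
  "mat_mul V A B = (\<lambda>p q. \<Sum>r\<in>V. A p r * B r q)"

definition mat_id :: "'i \<Rightarrow> 'i \<Rightarrow> real" where
  "mat_id = (\<lambda>p q. if p = q then 1 else 0)"

definition mat_vec :: "'i set \<Rightarrow> ('i \<Rightarrow> 'i \<Rightarrow> real) \<Rightarrow> ('i \<Rightarrow> real) \<Rightarrow> ('i \<Rightarrow> real)" where
  "mat_vec V A x = (\<lambda>p. \<Sum>q\<in>V. A p q * x q)"

definition vinner :: "'i set \<Rightarrow> ('i \<Rightarrow> real) \<Rightarrow> ('i \<Rightarrow> real) \<Rightarrow> real" where
  "vinner V x y = (\<Sum>p\<in>V. x p * y p)"

definition vnorm :: "'i set \<Rightarrow> ('i \<Rightarrow> real) \<Rightarrow> real" where
  "vnorm V x = sqrt (vinner V x x)"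

definition op_norm :: "'i set \<Rightarrow> ('i \<Rightarrow> 'i \<Rightarrow> real) \<Rightarrow> real" where
  "op_norm V A = Sup {vnorm V (mat_vec V A x) | x. vnorm V x \<le> 1}"

text \<open>Second largest singular value, via the Courant--Fischer min-max characterisation:
  sigma_2(A) = min over w of max { |A x| : |x| <= 1, x orthogonal to w }.\<close>
definition sigma2 :: "'i set \<Rightarrow> ('i \<Rightarrow> 'i \<Rightarrow> real) \<Rightarrow> real" where
  "sigma2 V A = Inf {Sup {vnorm V (mat_vec V A x) | x. vnorm V x \<le> 1 \<and> vinner V x w = 0} | w. True}"

text \<open>Vertices of H: tuples in [d1]^s, encoded as lists of length s with entries < d1
  (we use 0-based labels {0..<d1}).\<close>
definition tuples :: "nat \<Rightarrow> nat \<Rightarrow> nat list set" where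
  "tuples d1 s = {a. length a = s \<and> (\<forall>x\<in>set a. x < d1)}"

definition prod_vertices :: "nat \<Rightarrow> nat \<Rightarrow> nat \<Rightarrow> (nat \<times> nat list) set" where
  "prod_vertices n d1 s = {..<n} \<times> tuples d1 s"

text \<open>Rotation map of G given by the neighbour function nb (nb v j = v_G[j]) and the
  local-inversion bijection phi.\<close>
definition rotG :: "(nat \<Rightarrow> nat \<Rightarrow> nat) \<Rightarrow> (nat \<Rightarrow> nat) \<Rightarrow> nat \<times> nat \<Rightarrow> nat \<times> nat" where
  "rotG nb \<phi> = (\<lambda>(v, j). (nb v j, \<phi> j))"

definition loc_inv_rotation_graph :: "nat \<Rightarrow> nat \<Rightarrow> (nat \<Rightarrow> nat \<Rightarrow> nat) \<Rightarrow> (nat \<Rightarrow> nat) \<Rightarrow> bool" where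
  "loc_inv_rotation_graph n d1 nb \<phi> \<longleftrightarrow>
     bij_betw \<phi> {..<d1} {..<d1} \<and>
     (\<forall>v<n. \<forall>j<d1. nb v j < n \<and> rotG nb \<phi> (rotG nb \<phi> (v, j)) = (v, j))"

definition Rot :: "(nat \<Rightarrow> nat \<Rightarrow> nat) \<Rightarrow> (nat \<Rightarrow> nat) \<Rightarrow> nat \<Rightarrow> nat \<times> nat list \<Rightarrow> nat \<times> nat list" where
  "Rot nb \<phi> i = (\<lambda>(v, a). (nb v (a ! i), a[i := \<phi> (a ! i)]))"

definition Gmat :: "(nat \<Rightarrow> nat \<Rightarrow> nat) \<Rightarrow> (nat \<Rightarrow> nat) \<Rightarrow> nat \<Rightarrow> (nat \<times> nat list) \<Rightarrow> (nat \<times> nat list) \<Rightarrow> real" where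
  "Gmat nb \<phi> i = (\<lambda>p q. if p = Rot nb \<phi> i q then 1 else 0)"

text \<open>H is a d2-regular undirected (multi)graph on [d1]^s given by its adjacency matrix EH
  (EH a b = number of edges between a and b).\<close>
definition regular_graph_adj :: "nat list set \<Rightarrow> nat \<Rightarrow> (nat list \<Rightarrow> nat list \<Rightarrow> nat) \<Rightarrow> bool" where
  "regular_graph_adj W d2 EH \<longleftrightarrow>
     (\<forall>a b. EH a b \<noteq> 0 \<longrightarrow> a \<in> W \<and> b \<in> W) \<and>
     (\<forall>a b. EH a b = EH b a) \<and>
     (\<forall>a\<in>W. (\<Sum>b\<in>W. EH a b) = d2)"

definition norm_adj :: "nat \<Rightarrow> (nat list \<Rightarrow> nat list \<Rightarrow> nat) \<Rightarrow> nat list \<Rightarrow> nat list \<Rightarrow> real" where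
  "norm_adj d2 EH = (\<lambda>a b. real (EH a b) / real d2)"

definition I_tensor :: "(nat list \<Rightarrow> nat list \<Rightarrow> real) \<Rightarrow> (nat \<times> nat list) \<Rightarrow> (nat \<times> nat list) \<Rightarrow> real" where
  "I_tensor A = (\<lambda>(v, a) (w, b). if v = w then A a b else 0)"

definition Mmat :: "nat \<Rightarrow> nat \<Rightarrow> nat \<Rightarrow> nat \<Rightarrow> (nat \<Rightarrow> nat \<Rightarrow> nat) \<Rightarrow> (nat \<Rightarrow> nat)
    \<Rightarrow> (nat list \<Rightarrow> nat list \<Rightarrow> nat) \<Rightarrow> nat \<Rightarrow> (nat \<times> nat list) \<Rightarrow> (nat \<times> nat list) \<Rightarrow> real" where
  "Mmat n d1 s d2 nb \<phi> EH i =
     (let V = prod_vertices n d1 s; IA = I_tensor (norm_adj d2 EH) in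
      mat_mul V (mat_mul V IA (Gmat nb \<phi> (i mod s))) IA)"

text \<open>z in F_2^[n] is encoded as a boolean function (True = 1).\<close>
definition sgn_bit :: "bool \<Rightarrow> real" where
  "sgn_bit b = (if b then -1 else 1)"

definition bias :: "nat \<Rightarrow> (nat \<Rightarrow> bool) \<Rightarrow> real" where
  "bias n z = \<bar>(\<Sum>v<n. sgn_bit (z v)) / real n\<bar>"

definition Pz :: "(nat \<Rightarrow> bool) \<Rightarrow> (nat \<times> nat list) \<Rightarrow> (nat \<times> nat list) \<Rightarrow> real" where
  "Pz z = (\<lambda>p q. if p = q then sgn_bit (z (fst p)) else 0)"

fun walk_prod :: "(nat \<times> nat list) set \<Rightarrow> (nat \<Rightarrow> (nat \<times> nat list) \<Rightarrow> (nat \<times> nat list) \<Rightarrow> real)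
    \<Rightarrow> ((nat \<times> nat list) \<Rightarrow> (nat \<times> nat list) \<Rightarrow> real) \<Rightarrow> nat \<Rightarrow> (nat \<times> nat list) \<Rightarrow> (nat \<times> nat list) \<Rightarrow> real" where
  "walk_prod V M P 0 = mat_id"
| "walk_prod V M P (Suc k) = mat_mul V (mat_mul V (M k) P) (walk_prod V M P k)"

end

theory Submission
  imports Defs "HOL-Analysis.L2_Norm"
begin

text \<open>
  Each \<open>M\<^sub>i\<close> is a product of doubly stochastic matrices, hence a contraction that fixes the
  constant vector \<open>\<one>\<close> and maps \<open>\<one>\<^sup>\<bottom>\<close> into itself; by the Courant--Fischer
  characterisation of \<open>\<sigma>\<^sub>2\<close>, the hypothesis \<open>\<sigma>\<^sub>2(M\<^sub>i) \<le> \<gamma>\<close> says that \<open>M\<^sub>i\<close> shrinks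
  \<open>\<one>\<^sup>\<bottom>\<close> by the factor \<open>\<gamma>\<close>.  The sign flip \<open>P\<^sub>z\<close> is an isometry that moves the
  \<open>\<one>\<close>-component into \<open>\<one>\<^sup>\<bottom>\<close> except for a part of relative size \<open>bias(z) \<le> \<eta>\<^sub>0\<close>.  Hence
  two consecutive steps \<open>M\<^sub>j\<^sub>+\<^sub>1 P\<^sub>z M\<^sub>j P\<^sub>z\<close> of the walk shrink every vector by
  \<open>\<eta>\<^sub>0 + 2\<gamma>\<close>, and a single step does not increase its norm.
\<close>

definition sqnorm :: "'i set \<Rightarrow> ('i \<Rightarrow> real) \<Rightarrow> real" where
  "sqnorm V x = (\<Sum>p\<in>V. (x p)\<^sup>2)"

lemma vnorm_eq_sqrt_sqnorm: "vnorm V x = sqrt (sqnorm V x)"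
  by (simp add: vnorm_def vinner_def sqnorm_def power2_eq_square)

lemma vnorm_eq_L2_set: "vnorm V x = L2_set x V"
  by (simp add: vnorm_eq_sqrt_sqnorm sqnorm_def L2_set_def)

lemma sqnorm_nonneg [simp]: "0 \<le> sqnorm V x"
  by (simp add: sqnorm_def sum_nonneg)

lemma vnorm_nonneg [simp]: "0 \<le> vnorm V x"
  by (simp add: vnorm_eq_L2_set)

lemma vnorm_le_iff: "vnorm V x \<le> vnorm V y \<longleftrightarrow> sqnorm V x \<le> sqnorm V y"
  by (simp add: vnorm_eq_sqrt_sqnorm)

lemma vnorm_cong: "(\<And>p. p \<in> V \<Longrightarrow> x p = y p) \<Longrightarrow> vnorm V x = vnorm V y"
  by (simp add: vnorm_eq_L2_set L2_set_def)

lemma vnorm_add_le: "vnorm V (\<lambda>p. x p + y p) \<le> vnorm V x + vnorm V y"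
  unfolding vnorm_eq_L2_set by (rule L2_set_triangle_ineq)

lemma vnorm_scale: "vnorm V (\<lambda>p. c * x p) = \<bar>c\<bar> * vnorm V x"
  by (simp add: vnorm_eq_sqrt_sqnorm sqnorm_def power_mult_distrib real_sqrt_mult
      flip: sum_distrib_left)

lemma vnorm_const: "vnorm V (\<lambda>_. c) = \<bar>c\<bar> * sqrt (real (card V))"
  by (simp add: vnorm_eq_L2_set L2_set_constant)

lemma mat_vec_cong: "(\<And>p. p \<in> V \<Longrightarrow> x p = y p) \<Longrightarrow> mat_vec V A x = mat_vec V A y"
  by (simp add: mat_vec_def)

lemma mat_vec_scale: "mat_vec V A (\<lambda>p. c * x p) = (\<lambda>p. c * mat_vec V A x p)"
  by (simp add: mat_vec_def sum_distrib_left mult_ac)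

lemma mat_vec_affine:
  "mat_vec V A (\<lambda>p. c * x p + y p) = (\<lambda>p. c * mat_vec V A x p + mat_vec V A y p)"
  by (simp add: mat_vec_def distrib_left sum.distrib sum_distrib_left mult_ac)

lemma mat_vec_mat_mul: "mat_vec V (mat_mul V A B) x = mat_vec V A (mat_vec V B x)"
  unfolding mat_vec_def mat_mul_def
  by (auto simp: sum_distrib_left sum_distrib_right mult_ac intro!: ext; rule sum.swap)

lemma mat_vec_mat_id: "finite V \<Longrightarrow> p \<in> V \<Longrightarrow> mat_vec V mat_id x p = x p"
  by (simp add: mat_vec_def mat_id_def if_distrib[of "\<lambda>u. u * _"] cong: if_cong)

lemma sqnorm_const_add_orthogonal:
  assumes "sum y V = 0"
  shows "sqnorm V (\<lambda>p. c + y p) = c\<^sup>2 * real (card V) + sqnorm V y"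
proof -
  have "sqnorm V (\<lambda>p. c + y p) = (\<Sum>p\<in>V. c\<^sup>2 + 2 * c * y p + (y p)\<^sup>2)"
    unfolding sqnorm_def by (rule sum.cong) (auto simp: power2_eq_square algebra_simps)
  also have "\<dots> = c\<^sup>2 * real (card V) + 2 * c * sum y V + sqnorm V y"
    by (simp add: sum.distrib sqnorm_def sum_distrib_left)
  finally show ?thesis using assms by simp
qed

definition mean :: "'i set \<Rightarrow> ('i \<Rightarrow> real) \<Rightarrow> real" where
  "mean V u = sum u V / real (card V)"

lemma sum_diff_mean: "finite V \<Longrightarrow> V \<noteq> {} \<Longrightarrow> sum (\<lambda>p. u p - mean V u) V = 0"
  by (simp add: mean_def sum_subtractf)

lemma sqnorm_mean_decomp:
  assumes "finite V" "V \<noteq> {}"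
  shows "sqnorm V u = (mean V u)\<^sup>2 * real (card V) + sqnorm V (\<lambda>p. u p - mean V u)"
  using sqnorm_const_add_orthogonal[OF sum_diff_mean[OF assms, of u], where c = "mean V u"]
  by simp

lemma mean_vnorm_le:
  assumes "finite V" "V \<noteq> {}"
  shows "\<bar>mean V u\<bar> * sqrt (real (card V)) \<le> vnorm V u"
proof -
  have "(\<bar>mean V u\<bar> * sqrt (real (card V)))\<^sup>2 \<le> sqnorm V u"
    using sqnorm_mean_decomp[OF assms, of u] by (simp add: power_mult_distrib)
  then show ?thesis by (simp add: vnorm_eq_sqrt_sqnorm real_le_rsqrt)
qed

lemma vnorm_diff_mean_le:
  assumes "finite V" "V \<noteq> {}"
  shows "vnorm V (\<lambda>p. u p - mean V u) \<le> vnorm V u"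
  using sqnorm_mean_decomp[OF assms, of u] by (simp add: vnorm_le_iff)

lemma square_weighted_mean_le:
  fixes a y :: "'i \<Rightarrow> real"
  assumes "\<And>q. q \<in> V \<Longrightarrow> 0 \<le> a q" "sum a V = 1"
  shows "(\<Sum>q\<in>V. a q * y q)\<^sup>2 \<le> (\<Sum>q\<in>V. a q * (y q)\<^sup>2)"
proof -
  define m where "m = (\<Sum>q\<in>V. a q * y q)"
  have "0 \<le> (\<Sum>q\<in>V. a q * (y q - m)\<^sup>2)"
    using assms by (intro sum_nonneg) auto
  also have "\<dots> = (\<Sum>q\<in>V. a q * (y q)\<^sup>2 - 2 * m * (a q * y q) + m\<^sup>2 * a q)"
    by (rule sum.cong) (auto simp: power2_eq_square algebra_simps)
  also have "\<dots> = (\<Sum>q\<in>V. a q * (y q)\<^sup>2) - 2 * m * m + m\<^sup>2 * sum a V"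
    by (simp add: sum.distrib sum_subtractf sum_distrib_left m_def)
  finally show ?thesis
    using assms(2) by (simp add: m_def power2_eq_square)
qed

definition doubly_stochastic :: "'i set \<Rightarrow> ('i \<Rightarrow> 'i \<Rightarrow> real) \<Rightarrow> bool" where
  "doubly_stochastic V A \<longleftrightarrow>
     (\<forall>p\<in>V. \<forall>q\<in>V. 0 \<le> A p q) \<and> (\<forall>p\<in>V. (\<Sum>q\<in>V. A p q) = 1) \<and> (\<forall>q\<in>V. (\<Sum>p\<in>V. A p q) = 1)"

definition unital_contraction :: "'i set \<Rightarrow> ('i \<Rightarrow> 'i \<Rightarrow> real) \<Rightarrow> bool" where
  "unital_contraction V M \<longleftrightarrow>
     (\<forall>p\<in>V. mat_vec V M (\<lambda>_. 1) p = 1) \<and> (\<forall>y. sum (mat_vec V M y) V = sum y V) \<and>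
     (\<forall>y. vnorm V (mat_vec V M y) \<le> vnorm V y)"

lemma doubly_stochastic_unital_contraction:
  assumes "doubly_stochastic V A"
  shows "unital_contraction V A"
proof -
  have nonneg: "\<And>p q. p \<in> V \<Longrightarrow> q \<in> V \<Longrightarrow> 0 \<le> A p q"
    and rows: "\<And>p. p \<in> V \<Longrightarrow> (\<Sum>q\<in>V. A p q) = 1"
    and cols: "\<And>q. q \<in> V \<Longrightarrow> (\<Sum>p\<in>V. A p q) = 1"
    using assms by (auto simp: doubly_stochastic_def)
  have "sum (mat_vec V A y) V = (\<Sum>q\<in>V. (\<Sum>p\<in>V. A p q) * y q)" for y
    unfolding mat_vec_def by (simp add: sum_distrib_right) (rule sum.swap)
  then have sum_eq: "sum (mat_vec V A y) V = sum y V" for y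
    by (simp add: cols)
  have "sqnorm V (mat_vec V A y) \<le> (\<Sum>p\<in>V. \<Sum>q\<in>V. A p q * (y q)\<^sup>2)" for y
    unfolding sqnorm_def mat_vec_def
    by (intro sum_mono square_weighted_mean_le) (auto simp: nonneg rows)
  also have "(\<Sum>p\<in>V. \<Sum>q\<in>V. A p q * (y q)\<^sup>2) = sqnorm V y" for y
    using sum_eq[of "\<lambda>q. (y q)\<^sup>2"] by (simp add: mat_vec_def sqnorm_def)
  finally have "vnorm V (mat_vec V A y) \<le> vnorm V y" for y
    by (simp add: vnorm_le_iff)
  moreover have "mat_vec V A (\<lambda>_. 1) p = 1" if "p \<in> V" for p
    using rows[OF that] by (simp add: mat_vec_def)
  ultimately show ?thesis
    by (simp add: unital_contraction_def sum_eq)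
qed

lemma unital_contraction_mat_mul:
  assumes "unital_contraction V A" "unital_contraction V B"
  shows "unital_contraction V (mat_mul V A B)"
proof -
  have "mat_vec V A (mat_vec V B (\<lambda>_. 1)) = mat_vec V A (\<lambda>_. 1)"
    using assms(2) by (intro mat_vec_cong) (simp add: unital_contraction_def)
  with assms show ?thesis
    unfolding unital_contraction_def mat_vec_mat_mul by (metis order_trans)
qed

lemma unital_contraction_vnorm_le:
  "unital_contraction V M \<Longrightarrow> vnorm V (mat_vec V M y) \<le> vnorm V y"
  by (simp add: unital_contraction_def)

lemma sigma2_lower_bound:
  assumes contr: "\<And>x. vnorm V (mat_vec V M x) \<le> vnorm V x"
    and witness: "\<And>w. \<exists>x. vinner V x w = 0 \<and> 0 < vnorm V x \<and> c * vnorm V x \<le> vnorm V (mat_vec V M x)"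
  shows "c \<le> sigma2 V M"
proof -
  define S where "S w = {vnorm V (mat_vec V M x) | x. vnorm V x \<le> 1 \<and> vinner V x w = 0}" for w
  have "c \<le> Sup (S w)" for w
  proof -
    obtain x where x: "vinner V x w = 0" "0 < vnorm V x" "c * vnorm V x \<le> vnorm V (mat_vec V M x)"
      using witness by blast
    define r where "r = 1 / vnorm V x"
    have r: "0 < r" "r * vnorm V x = 1"
      using x(2) by (simp_all add: r_def)
    have "c = r * (c * vnorm V x)"
      using r(2) by (simp add: mult.left_commute)
    also have "\<dots> \<le> r * vnorm V (mat_vec V M x)"
      using x(3) r(1) by (intro mult_left_mono) simp_all
    also have "\<dots> = vnorm V (mat_vec V M (\<lambda>p. r * x p))"
      using r(1) by (simp add: mat_vec_scale vnorm_scale abs_of_pos)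
    finally have "c \<le> vnorm V (mat_vec V M (\<lambda>p. r * x p))" .
    moreover have "vnorm V (\<lambda>p. r * x p) = 1"
      using r by (simp add: vnorm_scale abs_of_pos)
    moreover have "vinner V (\<lambda>p. r * x p) w = 0"
      using x(1) by (simp add: vinner_def mult.assoc flip: sum_distrib_left)
    moreover have "bdd_above (S w)"
      unfolding S_def by (rule bdd_aboveI[of _ 1]) (use contr order_trans in blast)
    ultimately show ?thesis
      unfolding S_def by (intro cSup_upper2) auto
  qed
  then have "c \<le> Inf {Sup (S w) | w. True}"
    by (intro cInf_greatest) auto
  then show ?thesis by (simp add: sigma2_def S_def)
qed

text \<open>For \<open>w \<bottom> \<one>\<close> the witness is \<open>\<one>\<close> itself; otherwise it is the vector of \<open>span {\<one>, y}\<close>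
  orthogonal to \<open>w\<close>.  On that span \<open>M\<close> fixes \<open>\<one>\<close> and maps \<open>y\<close> into \<open>\<one>\<^sup>\<bottom>\<close>, so
  \<open>|Mx| / |x| \<ge> |My| / |y|\<close>.\<close>
lemma unital_contraction_witness:
  assumes fin: "finite V" and ne: "V \<noteq> {}" and M: "unital_contraction V M"
    and y: "sum y V = 0" "0 < vnorm V y"
  shows "\<exists>x. vinner V x w = 0 \<and> 0 < vnorm V x \<and>
           vnorm V (mat_vec V M y) * vnorm V x \<le> vnorm V (mat_vec V M x) * vnorm V y"
proof (cases "sum w V = 0")
  case True
  have "vnorm V (mat_vec V M (\<lambda>_. 1)) = vnorm V (\<lambda>_. 1::real)"
    using M by (intro vnorm_cong) (simp add: unital_contraction_def)
  moreover have "0 < vnorm V (\<lambda>_. 1::real)"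
    using fin ne by (simp add: vnorm_const card_gt_0_iff)
  ultimately show ?thesis
    using True unital_contraction_vnorm_le[OF M, of y]
    by (intro exI[of _ "\<lambda>_. 1"]) (simp add: vinner_def mult_right_mono)
next
  case False
  define N where "N = real (card V)"
  define c where "c = vinner V y w"
  define d where "d = - sum w V"
  define x where "x p = c + d * y p" for p
  have dy: "sum (\<lambda>p. d * y p) V = 0" and dMy: "sum (\<lambda>p. d * mat_vec V M y p) V = 0"
    using y M by (simp_all add: unital_contraction_def flip: sum_distrib_left)
  have "vinner V x w = c * sum w V + d * vinner V y w"
    by (simp add: x_def vinner_def algebra_simps sum.distrib sum_distrib_left)
  then have orth: "vinner V x w = 0"
    by (simp add: c_def d_def)
  have sq_x: "sqnorm V x = c\<^sup>2 * N + d\<^sup>2 * sqnorm V y"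
    using sqnorm_const_add_orthogonal[OF dy, of c]
    by (simp add: x_def N_def sqnorm_def power_mult_distrib sum_distrib_left)
  have "mat_vec V M x p = c + d * mat_vec V M y p" if "p \<in> V" for p
    using M that unfolding x_def mat_vec_affine[of V M c "\<lambda>_. 1", simplified]
    by (simp add: mat_vec_scale unital_contraction_def)
  then have "sqnorm V (mat_vec V M x) = sqnorm V (\<lambda>p. c + d * mat_vec V M y p)"
    by (simp add: sqnorm_def)
  also have "\<dots> = c\<^sup>2 * N + d\<^sup>2 * sqnorm V (mat_vec V M y)"
    using sqnorm_const_add_orthogonal[OF dMy, of c]
    by (simp add: N_def sqnorm_def power_mult_distrib sum_distrib_left)
  finally have sq_Mx: "sqnorm V (mat_vec V M x) = c\<^sup>2 * N + d\<^sup>2 * sqnorm V (mat_vec V M y)" .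
  have "sqnorm V (mat_vec V M y) \<le> sqnorm V y"
    using unital_contraction_vnorm_le[OF M] by (simp add: vnorm_le_iff)
  then have "c\<^sup>2 * N * sqnorm V (mat_vec V M y) \<le> c\<^sup>2 * N * sqnorm V y"
    by (intro mult_left_mono) (simp_all add: N_def)
  then have "sqnorm V (mat_vec V M y) * sqnorm V x \<le> sqnorm V (mat_vec V M x) * sqnorm V y"
    unfolding sq_x sq_Mx by (simp add: algebra_simps)
  then have "vnorm V (mat_vec V M y) * vnorm V x \<le> vnorm V (mat_vec V M x) * vnorm V y"
    by (simp add: vnorm_eq_sqrt_sqnorm flip: real_sqrt_mult)
  moreover have "0 < vnorm V x"
  proof -
    have "0 < d\<^sup>2 * sqnorm V y"
      using False y(2) by (simp add: d_def vnorm_eq_sqrt_sqnorm)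
    also have "\<dots> \<le> sqnorm V x"
      unfolding sq_x by (simp add: N_def)
    finally show ?thesis
      by (simp add: vnorm_eq_sqrt_sqnorm)
  qed
  ultimately show ?thesis
    using orth by blast
qed

lemma unital_contraction_orthogonal_bound:
  assumes fin: "finite V" and ne: "V \<noteq> {}" and M: "unital_contraction V M" and y: "sum y V = 0"
  shows "vnorm V (mat_vec V M y) \<le> sigma2 V M * vnorm V y"
proof (cases "vnorm V y = 0")
  case True
  then show ?thesis
    using unital_contraction_vnorm_le[OF M, of y] by simp
next
  case False
  then have pos: "0 < vnorm V y"
    using vnorm_nonneg[of V y] by linarith
  have "vnorm V (mat_vec V M y) / vnorm V y \<le> sigma2 V M"
  proof (rule sigma2_lower_bound)
    show "vnorm V (mat_vec V M x) \<le> vnorm V x" for x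
      by (rule unital_contraction_vnorm_le[OF M])
    show "\<exists>x. vinner V x w = 0 \<and> 0 < vnorm V x \<and>
            vnorm V (mat_vec V M y) / vnorm V y * vnorm V x \<le> vnorm V (mat_vec V M x)" for w
      using unital_contraction_witness[OF fin ne M y pos, of w] pos
      by (simp add: divide_le_eq mult.commute)
  qed
  then show ?thesis
    using pos by (simp add: divide_le_eq)
qed

definition diag_mat :: "('i \<Rightarrow> real) \<Rightarrow> 'i \<Rightarrow> 'i \<Rightarrow> real" where
  "diag_mat \<sigma> = (\<lambda>p q. if p = q then \<sigma> p else 0)"

lemma mat_vec_diag_mat: "finite V \<Longrightarrow> p \<in> V \<Longrightarrow> mat_vec V (diag_mat \<sigma>) x p = \<sigma> p * x p"
  by (simp add: mat_vec_def diag_mat_def if_distrib[of "\<lambda>u. u * _"] cong: if_cong)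

lemma vnorm_diag_mat_sign:
  assumes fin: "finite V" and sign: "\<And>p. p \<in> V \<Longrightarrow> \<bar>\<sigma> p\<bar> = 1"
  shows "vnorm V (mat_vec V (diag_mat \<sigma>) x) = vnorm V x"
proof -
  have "(\<sigma> p)\<^sup>2 = 1" if "p \<in> V" for p
    using sign[OF that] by (metis power2_abs one_power2)
  then have "sqnorm V (\<lambda>p. \<sigma> p * x p) = sqnorm V x"
    by (simp add: sqnorm_def power_mult_distrib)
  moreover have "vnorm V (mat_vec V (diag_mat \<sigma>) x) = vnorm V (\<lambda>p. \<sigma> p * x p)"
    using fin by (intro vnorm_cong) (simp add: mat_vec_diag_mat)
  ultimately show ?thesis
    by (simp add: vnorm_eq_sqrt_sqnorm)
qed

lemma pair_step_decomp:
  assumes fin: "finite V" and M: "unital_contraction V M" and M': "unital_contraction V M'"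
    and p: "p \<in> V"
  shows "mat_vec V M' (mat_vec V (diag_mat \<sigma>) (mat_vec V M (\<lambda>q. a + y q))) p
       = a * b + a * mat_vec V M' (\<lambda>q. \<sigma> q - b) p
         + mat_vec V M' (mat_vec V (diag_mat \<sigma>) (mat_vec V M y)) p"
proof -
  let ?P = "mat_vec V (diag_mat \<sigma>)"
  have "mat_vec V M (\<lambda>q. a + y q) = (\<lambda>q. a * mat_vec V M (\<lambda>_. 1) q + mat_vec V M y q)"
    unfolding mat_vec_affine[symmetric] by simp
  then have "?P (mat_vec V M (\<lambda>q. a + y q)) q = a * \<sigma> q + ?P (mat_vec V M y) q" if "q \<in> V" for q
    using M fin that by (simp add: mat_vec_diag_mat unital_contraction_def algebra_simps)
  then have "mat_vec V M' (?P (mat_vec V M (\<lambda>q. a + y q)))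
      = mat_vec V M' (\<lambda>q. a * \<sigma> q + ?P (mat_vec V M y) q)"
    by (rule mat_vec_cong)
  also have "\<dots> = (\<lambda>q. a * mat_vec V M' \<sigma> q + mat_vec V M' (?P (mat_vec V M y)) q)"
    by (rule mat_vec_affine)
  also have "mat_vec V M' \<sigma> = (\<lambda>q. b * mat_vec V M' (\<lambda>_. 1) q + mat_vec V M' (\<lambda>q. \<sigma> q - b) q)"
    unfolding mat_vec_affine[symmetric] by simp
  finally show ?thesis
    using M' p by (simp add: unital_contraction_def algebra_simps)
qed

text \<open>Split \<open>P x = a\<one> + y\<close> and \<open>\<sigma> = b\<one> + w\<close> with \<open>y, w \<bottom> \<one>\<close>.  Then
  \<open>M' P M P x = ab\<one> + a M'w + M' P M y\<close>: the first term is small because \<open>|b|\<close> is, the other two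
  because \<open>M'\<close> resp. \<open>M\<close> act on \<open>\<one>\<^sup>\<bottom>\<close>.\<close>
lemma pair_step_bound:
  assumes fin: "finite V" and ne: "V \<noteq> {}"
    and M: "unital_contraction V M" and M': "unital_contraction V M'"
    and orth_M: "\<And>y. sum y V = 0 \<Longrightarrow> vnorm V (mat_vec V M y) \<le> \<gamma> * vnorm V y"
    and orth_M': "\<And>y. sum y V = 0 \<Longrightarrow> vnorm V (mat_vec V M' y) \<le> \<gamma> * vnorm V y"
    and sign: "\<And>p. p \<in> V \<Longrightarrow> \<bar>\<sigma> p\<bar> = 1" and bias: "\<bar>mean V \<sigma>\<bar> \<le> \<eta>" and "0 \<le> \<gamma>"
  shows "vnorm V (mat_vec V M' (mat_vec V (diag_mat \<sigma>) (mat_vec V M (mat_vec V (diag_mat \<sigma>) x))))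
           \<le> (\<eta> + 2 * \<gamma>) * vnorm V x"
proof -
  let ?P = "mat_vec V (diag_mat \<sigma>)"
  define N where "N = sqrt (real (card V))"
  define u where "u = ?P x"
  define a where "a = mean V u"
  define y where "y = (\<lambda>p. u p - a)"
  define b where "b = mean V \<sigma>"
  define w where "w = (\<lambda>p. \<sigma> p - b)"
  define t where "t = ?P (mat_vec V M y)"
  have "0 \<le> N" and b: "\<bar>b\<bar> \<le> \<eta>"
    using bias by (simp_all add: N_def b_def)
  have u: "vnorm V u = vnorm V x"
    by (simp add: u_def vnorm_diag_mat_sign[OF fin sign])
  have a: "\<bar>a\<bar> * N \<le> vnorm V x"
    using mean_vnorm_le[OF fin ne, of u] by (simp add: a_def N_def u)
  have y: "sum y V = 0" "vnorm V y \<le> vnorm V x"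
    using sum_diff_mean[OF fin ne, of u] vnorm_diff_mean_le[OF fin ne, of u]
    by (simp_all add: y_def a_def u)
  have "vnorm V \<sigma> = vnorm V (?P (\<lambda>_. 1))"
    using fin by (intro vnorm_cong) (simp add: mat_vec_diag_mat)
  then have "vnorm V \<sigma> = N"
    by (simp add: vnorm_diag_mat_sign[OF fin sign] vnorm_const N_def)
  then have w: "sum w V = 0" "vnorm V w \<le> N"
    using sum_diff_mean[OF fin ne, of \<sigma>] vnorm_diff_mean_le[OF fin ne, of \<sigma>]
    by (simp_all add: w_def b_def)
  have "u = (\<lambda>p. a + y p)"
    by (simp add: y_def)
  then have "vnorm V (mat_vec V M' (?P (mat_vec V M u)))
      = vnorm V (\<lambda>p. (a * b + a * mat_vec V M' w p) + mat_vec V M' t p)"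
    using pair_step_decomp[OF fin M M'] by (intro vnorm_cong) (simp add: w_def t_def)
  also have "\<dots> \<le> (vnorm V (\<lambda>_. a * b) + vnorm V (\<lambda>p. a * mat_vec V M' w p)) + vnorm V (mat_vec V M' t)"
    by (rule order_trans[OF vnorm_add_le add_right_mono[OF vnorm_add_le]])
  also have "\<dots> \<le> (\<eta> * vnorm V x + \<gamma> * vnorm V x) + \<gamma> * vnorm V x"
  proof (intro add_mono)
    have "vnorm V (\<lambda>_. a * b) = \<bar>b\<bar> * (\<bar>a\<bar> * N)"
      by (simp add: vnorm_const N_def abs_mult)
    also have "\<dots> \<le> \<eta> * vnorm V x"
      using b a \<open>0 \<le> N\<close> by (intro mult_mono) auto
    finally show "vnorm V (\<lambda>_. a * b) \<le> \<eta> * vnorm V x" .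
    have "vnorm V (\<lambda>p. a * mat_vec V M' w p) \<le> \<bar>a\<bar> * (\<gamma> * N)"
      unfolding vnorm_scale using orth_M'[OF w(1)] w(2) \<open>0 \<le> \<gamma>\<close>
      by (intro mult_left_mono) (simp_all add: order_trans[OF _ mult_left_mono])
    also have "\<dots> \<le> \<gamma> * vnorm V x"
      using a \<open>0 \<le> \<gamma>\<close> by (simp add: mult.left_commute mult_left_mono)
    finally show "vnorm V (\<lambda>p. a * mat_vec V M' w p) \<le> \<gamma> * vnorm V x" .
    have "vnorm V (mat_vec V M' t) \<le> vnorm V (mat_vec V M y)"
      using unital_contraction_vnorm_le[OF M', of t] by (simp add: t_def vnorm_diag_mat_sign[OF fin sign])
    also have "\<dots> \<le> \<gamma> * vnorm V x"
      using orth_M[OF y(1)] y(2) \<open>0 \<le> \<gamma>\<close> by (meson order_trans mult_left_mono)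
    finally show "vnorm V (mat_vec V M' t) \<le> \<gamma> * vnorm V x" .
  qed
  finally show ?thesis
    by (simp add: u_def algebra_simps)
qed

lemma vnorm_mat_id: "finite V \<Longrightarrow> vnorm V (mat_vec V mat_id x) = vnorm V x"
  by (intro vnorm_cong) (simp add: mat_vec_mat_id)

lemma walk_prod_Suc_mat_vec:
  "mat_vec V (walk_prod V M P (Suc k)) x = mat_vec V (M k) (mat_vec V P (mat_vec V (walk_prod V M P k) x))"
  by (simp add: mat_vec_mat_mul)

lemma walk_prod_bound:
  fixes V :: "(nat \<times> nat list) set"
  assumes fin: "finite V" and ne: "V \<noteq> {}"
    and M: "\<And>i. i < k \<Longrightarrow> unital_contraction V (M i)"
    and orth: "\<And>i y. i < k \<Longrightarrow> sum y V = 0 \<Longrightarrow> vnorm V (mat_vec V (M i) y) \<le> \<gamma> * vnorm V y"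
    and sign: "\<And>p. p \<in> V \<Longrightarrow> \<bar>\<sigma> p\<bar> = 1" and bias: "\<bar>mean V \<sigma>\<bar> \<le> \<eta>" and "0 \<le> \<gamma>"
  shows "vnorm V (mat_vec V (walk_prod V M (diag_mat \<sigma>) k) x) \<le> (\<eta> + 2 * \<gamma>) ^ (k div 2) * vnorm V x"
  using M orth
proof (induction k arbitrary: x rule: nat_induct2)
  case 0
  show ?case
    using fin by (simp add: vnorm_mat_id)
next
  case 1
  have "vnorm V (mat_vec V (walk_prod V M (diag_mat \<sigma>) 1) x)
      = vnorm V (mat_vec V (M 0) (mat_vec V (diag_mat \<sigma>) (mat_vec V (walk_prod V M (diag_mat \<sigma>) 0) x)))"
    by (simp only: One_nat_def walk_prod_Suc_mat_vec)
  also have "\<dots> \<le> vnorm V (mat_vec V (diag_mat \<sigma>) (mat_vec V (walk_prod V M (diag_mat \<sigma>) 0) x))"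
    by (rule unital_contraction_vnorm_le) (simp add: "1.prems")
  also have "\<dots> = vnorm V x"
    by (simp add: vnorm_diag_mat_sign[OF fin sign] vnorm_mat_id[OF fin])
  finally show ?case
    by simp
next
  case (step k)
  have "vnorm V (mat_vec V (walk_prod V M (diag_mat \<sigma>) (k + 2)) x)
      \<le> (\<eta> + 2 * \<gamma>) * vnorm V (mat_vec V (walk_prod V M (diag_mat \<sigma>) k) x)"
    unfolding add_2_eq_Suc' walk_prod_Suc_mat_vec
    by (rule pair_step_bound[OF fin ne _ _ _ _ sign bias \<open>0 \<le> \<gamma>\<close>]) (simp_all add: step.prems)
  moreover have "vnorm V (mat_vec V (walk_prod V M (diag_mat \<sigma>) k) x) \<le> (\<eta> + 2 * \<gamma>) ^ (k div 2) * vnorm V x"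
    by (rule step.IH) (simp_all add: step.prems)
  moreover have "0 \<le> \<eta> + 2 * \<gamma>"
    using bias abs_ge_zero[of "mean V \<sigma>"] \<open>0 \<le> \<gamma>\<close> by linarith
  ultimately show ?case
    by (simp add: order_trans[OF _ mult_left_mono] mult.assoc)
qed

lemma op_norm_le:
  assumes "\<And>x. vnorm V (mat_vec V A x) \<le> B * vnorm V x" "0 \<le> B"
  shows "op_norm V A \<le> B"
  unfolding op_norm_def
proof (rule cSup_least)
  show "{vnorm V (mat_vec V A x) |x. vnorm V x \<le> 1} \<noteq> {}"
    by (auto intro!: exI[of _ "\<lambda>_. 0"] simp: vnorm_const)
  show "u \<le> B" if "u \<in> {vnorm V (mat_vec V A x) |x. vnorm V x \<le> 1}" for u
    using that assms order_trans[OF assms(1) mult_left_mono] by fastforce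
qed

lemma permutation_matrix_doubly_stochastic:
  assumes fin: "finite V" and f: "bij_betw f V V"
  shows "doubly_stochastic V (\<lambda>p q. if p = f q then 1 else 0)"
proof -
  have "(\<Sum>q\<in>V. if p = f q then 1 else 0) = (\<Sum>r\<in>V. if p = r then 1 else (0::real))" for p
    using sum.reindex_bij_betw[OF f, of "\<lambda>r. if p = r then 1 else 0"] by simp
  moreover have "f q \<in> V" if "q \<in> V" for q
    using f that by (rule bij_betw_apply)
  ultimately show ?thesis
    using fin by (simp add: doubly_stochastic_def)
qed

lemma finite_tuples: "finite (tuples d1 s)"
proof -
  have "tuples d1 s \<subseteq> {xs. set xs \<subseteq> {..<d1} \<and> length xs = s}"
    by (auto simp: tuples_def)
  then show ?thesis
    by (rule finite_subset) (simp add: finite_lists_length_eq)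
qed

lemma replicate_zero_in_tuples: "1 \<le> d1 \<Longrightarrow> replicate s 0 \<in> tuples d1 s"
  by (simp add: tuples_def)

lemma finite_prod_vertices: "finite (prod_vertices n d1 s)"
  by (simp add: prod_vertices_def finite_tuples)

lemma prod_vertices_nonempty: "1 \<le> n \<Longrightarrow> 1 \<le> d1 \<Longrightarrow> prod_vertices n d1 s \<noteq> {}"
  using replicate_zero_in_tuples by (fastforce simp: prod_vertices_def)

lemma Rot_involution:
  assumes G: "loc_inv_rotation_graph n d1 nb \<phi>" and i: "i < s" and q: "q \<in> prod_vertices n d1 s"
  shows "Rot nb \<phi> i q \<in> prod_vertices n d1 s" "Rot nb \<phi> i (Rot nb \<phi> i q) = q"
proof -
  obtain v a where q_eq: "q = (v, a)" and v: "v < n" and a: "length a = s" "\<forall>x\<in>set a. x < d1"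
    using q by (auto simp: prod_vertices_def tuples_def)
  define j where "j = a ! i"
  have j: "j < d1"
    using a i by (simp add: j_def)
  have "\<phi> j < d1"
    using G j bij_betw_apply[of \<phi> "{..<d1}" "{..<d1}" j] by (simp add: loc_inv_rotation_graph_def)
  moreover have "nb v j < n" "nb (nb v j) (\<phi> j) = v" "\<phi> (\<phi> j) = j"
    using G v j by (auto simp: loc_inv_rotation_graph_def rotG_def)
  ultimately show "Rot nb \<phi> i q \<in> prod_vertices n d1 s" "Rot nb \<phi> i (Rot nb \<phi> i q) = q"
    using a i
    by (auto simp: prod_vertices_def tuples_def Rot_def q_eq j_def
        dest!: set_update_subset_insert[THEN subsetD])
qed

lemma Gmat_doubly_stochastic:
  assumes G: "loc_inv_rotation_graph n d1 nb \<phi>" and i: "i < s"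
  shows "doubly_stochastic (prod_vertices n d1 s) (Gmat nb \<phi> i)"
  unfolding Gmat_def
proof (rule permutation_matrix_doubly_stochastic[OF finite_prod_vertices])
  show "bij_betw (Rot nb \<phi> i) (prod_vertices n d1 s) (prod_vertices n d1 s)"
    by (rule bij_betw_byWitness[where f' = "Rot nb \<phi> i"]) (use Rot_involution[OF G i] in auto)
qed

lemma norm_adj_doubly_stochastic:
  assumes H: "regular_graph_adj W d2 EH" and d2: "1 \<le> d2"
  shows "doubly_stochastic W (norm_adj d2 EH)"
proof -
  have sym: "EH a b = EH b a" and deg: "a \<in> W \<Longrightarrow> (\<Sum>b\<in>W. EH a b) = d2" for a b
    using H by (auto simp: regular_graph_adj_def)
  have rows: "(\<Sum>b\<in>W. norm_adj d2 EH a b) = 1" if "a \<in> W" for a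
    using deg[OF that] d2 by (simp add: norm_adj_def flip: sum_divide_distrib of_nat_sum)
  have "norm_adj d2 EH a b = norm_adj d2 EH b a" for a b
    unfolding norm_adj_def by (metis sym)
  then have "(\<Sum>a\<in>W. norm_adj d2 EH a b) = 1" if "b \<in> W" for b
    using rows[OF that] by simp
  with rows show ?thesis
    by (simp add: doubly_stochastic_def norm_adj_def)
qed

lemma I_tensor_doubly_stochastic:
  assumes fin: "finite N" and A: "doubly_stochastic T A"
  shows "doubly_stochastic (N \<times> T) (I_tensor A)"
proof -
  have rows: "(\<Sum>q\<in>N \<times> T. I_tensor A (v, a) q) = (\<Sum>b\<in>T. A a b)" if "v \<in> N" for v a
  proof -
    have "(\<Sum>q\<in>N \<times> T. I_tensor A (v, a) q) = (\<Sum>w\<in>N. if v = w then \<Sum>b\<in>T. A a b else 0)"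
      unfolding sum.cartesian_product' by (intro sum.cong) (simp_all add: I_tensor_def)
    then show ?thesis
      using fin that by simp
  qed
  have cols: "(\<Sum>p\<in>N \<times> T. I_tensor A p (w, b)) = (\<Sum>a\<in>T. A a b)" if "w \<in> N" for w b
  proof -
    have "(\<Sum>p\<in>N \<times> T. I_tensor A p (w, b)) = (\<Sum>v\<in>N. if v = w then \<Sum>a\<in>T. A a b else 0)"
      unfolding sum.cartesian_product' by (intro sum.cong) (simp_all add: I_tensor_def)
    then show ?thesis
      using fin that by simp
  qed
  show ?thesis
    using A rows cols by (auto simp: doubly_stochastic_def I_tensor_def)
qed

lemma Mmat_unital_contraction:
  assumes G: "loc_inv_rotation_graph n d1 nb \<phi>" and H: "regular_graph_adj (tuples d1 s) d2 EH"
    and "1 \<le> d2" "1 \<le> s"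
  shows "unital_contraction (prod_vertices n d1 s) (Mmat n d1 s d2 nb \<phi> EH i)"
proof -
  have "doubly_stochastic (prod_vertices n d1 s) (I_tensor (norm_adj d2 EH))"
    unfolding prod_vertices_def
    by (intro I_tensor_doubly_stochastic norm_adj_doubly_stochastic H assms(3)) simp
  moreover have "doubly_stochastic (prod_vertices n d1 s) (Gmat nb \<phi> (i mod s))"
    using assms(4) by (intro Gmat_doubly_stochastic[OF G]) simp
  ultimately show ?thesis
    unfolding Mmat_def Let_def
    by (intro unital_contraction_mat_mul doubly_stochastic_unital_contraction)
qed

lemma Pz_eq_diag_mat: "Pz z = diag_mat (\<lambda>p. sgn_bit (z (fst p)))"
  by (simp add: Pz_def diag_mat_def)

lemma bias_eq_abs_mean:
  assumes "1 \<le> d1"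
  shows "bias n z = \<bar>mean (prod_vertices n d1 s) (\<lambda>p. sgn_bit (z (fst p)))\<bar>"
proof -
  have "card (tuples d1 s) \<noteq> 0"
    using assms finite_tuples replicate_zero_in_tuples by (metis card_0_eq empty_iff)
  then show ?thesis
    by (simp add: bias_def mean_def prod_vertices_def sum.cartesian_product' card_cartesian_product
        abs_mult flip: sum_distrib_left)
qed

theorem mainTheorem2:
  fixes n d1 d2 s :: nat
    and nb :: "nat \<Rightarrow> nat \<Rightarrow> nat" and \<phi> :: "nat \<Rightarrow> nat"
    and EH :: "nat list \<Rightarrow> nat list \<Rightarrow> nat"
    and z :: "nat \<Rightarrow> bool" and \<eta>0 \<gamma> :: real
  assumes "n \<ge> 1" and "d1 \<ge> 1" and "d2 \<ge> 1" and "s \<ge> 1"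
    and "loc_inv_rotation_graph n d1 nb \<phi>"
    and "regular_graph_adj (tuples d1 s) d2 EH"
    and "bias n z \<le> \<eta>0"
    and "\<gamma> \<ge> 0"
    and "\<forall>i. i + 2 \<le> s \<longrightarrow>
           sigma2 (prod_vertices n d1 s) (Mmat n d1 s d2 nb \<phi> EH i) \<le> \<gamma>"
  shows "op_norm (prod_vertices n d1 s)
           (walk_prod (prod_vertices n d1 s) (Mmat n d1 s d2 nb \<phi> EH) (Pz z) (s - 1))
         \<le> (\<eta>0 + 2 * \<gamma>) ^ ((s - 1) div 2)"
proof -
  let ?V = "prod_vertices n d1 s" and ?M = "Mmat n d1 s d2 nb \<phi> EH"
  let ?\<sigma> = "\<lambda>p. sgn_bit (z (fst p))"
  have fin: "finite ?V" and ne: "?V \<noteq> {}"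
    using assms(1,2) by (simp_all add: finite_prod_vertices prod_vertices_nonempty)
  have contr: "unital_contraction ?V (?M i)" for i
    using Mmat_unital_contraction[OF assms(5,6,3,4)] .
  have orth: "vnorm ?V (mat_vec ?V (?M i) y) \<le> \<gamma> * vnorm ?V y" if "i < s - 1" "sum y ?V = 0" for i y
  proof -
    have "vnorm ?V (mat_vec ?V (?M i) y) \<le> sigma2 ?V (?M i) * vnorm ?V y"
      by (rule unital_contraction_orthogonal_bound[OF fin ne contr that(2)])
    also have "\<dots> \<le> \<gamma> * vnorm ?V y"
      using assms(9) that(1) by (intro mult_right_mono) auto
    finally show ?thesis .
  qed
  have bias: "\<bar>mean ?V ?\<sigma>\<bar> \<le> \<eta>0"
    using assms(7) bias_eq_abs_mean[OF assms(2), of n z s] by linarith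
  have "vnorm ?V (mat_vec ?V (walk_prod ?V ?M (Pz z) (s - 1)) x) \<le> (\<eta>0 + 2 * \<gamma>) ^ ((s - 1) div 2) * vnorm ?V x"
    for x
    unfolding Pz_eq_diag_mat
    by (rule walk_prod_bound[OF fin ne contr orth _ bias assms(8)]) (simp_all add: sgn_bit_def)
  moreover have "0 \<le> (\<eta>0 + 2 * \<gamma>) ^ ((s - 1) div 2)"
    using bias assms(8) by simp
  ultimately show ?thesis
    by (rule op_norm_le)
qed

end
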